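(* Let $r\ge 2$ and $m$ be integers with $1\le m$ and $2m\le r$, and let $M_m\subseteq\mathbb{P}^r$ be the variety defined in the context. Then $M_m$ contains the osculating variety $T^{m-1}c_r$ of the Veronese curve but does not contain $T^{m}c_r$. In particular, $\dim(M_m)\ge m$.
   Context: $\mathfrak{sl}_2(\mathbb{C})$ has basis $X=\begin{pmatrix}0&1\\0&0\end{pmatrix}$, $H=\mathrm{diag}(1,-1)$, $Y=\begin{pmatrix}0&0\\1&0\end{pmatrix}$ acting on the irreducible module $S^r(\mathbb{C}^2)$ of binary forms of degree $r$. Let $x_0$ be a highest weight vector and $x_i=Y^ix_0/i!$ ($0\le i\le r$); identify $\mathbb{P}S^r(\mathbb{C}^2)=\mathbb{P}^r$ via coordinates $(a_0:\dots:a_r)\leftrightarrow[\sum a_ix_i]$. As $\mathfrak{sl}_2$-modules $S^2(S^r(\mathbb{C}^2))\cong\bigoplus_{m'\ge0,\,4m'\le 2r}S^{2r-4m'}(\mathbb{C}^2)$; let $f_m:S^2(S^r(\mathbb{C}^2))\to S^{2r-4m}(\mathbb{C}^2)$ be the projection onto the summand $S^{2r-4m}(\mathbb{C}^2)$ and $M_m=\{[x]: f_m(xx)=0\}$. The Veronese curve $c_r\subseteq\mathbb{P}^r$ is the closure of the image of $t\mapsto c_r(t)=(1:t:t^2:\dots:t^r)$, and for $p\ge 0$ its $p$-osculating variety $T^pc_r$ is the Zariski closure of the image of $(t,\lambda_1,\dots,\lambda_p)\mapsto c_r(t)+\lambda_1c_r'(t)+\dots+\lambda_pc_r^{(p)}(t)$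 (derivatives in $t$ of the vector $(1,t,\dots,t^r)$); $T^0c_r=c_r$. *)

theory Defs
  imports "HOL-Analysis.Analysis"
begin

text \<open>A vector of S^r(C^2) is represented by its coordinate function a :: nat => complex
  w.r.t. the basis x_0,...,x_r (x_i = Y^i x_0 / i!), with a i = 0 for i > r.
  Points of P^r are represented by nonzero such vectors (all sets below are cones, i.e.
  unions of lines through the origin minus 0; containment of cones = containment of
  projective sets).\<close>

definition PV :: "nat \<Rightarrow> (nat \<Rightarrow> complex) set" where
  "PV r = {a. (\<forall>i>r. a i = 0) \<and> (\<exists>i\<le>r. a i \<noteq> 0)}"

text \<open>Y x_i = (i+1) x_(i+1) (and Y x_r = 0), H x_i = (r - 2i) x_i,
  X x_i = (r - i + 1) x_(i-1) (and X x_0 = 0).\<close>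

definition Yop :: "nat \<Rightarrow> (nat \<Rightarrow> complex) \<Rightarrow> (nat \<Rightarrow> complex)" where
  "Yop r a = (\<lambda>i. if 1 \<le> i \<and> i \<le> r then of_nat i * a (i - 1) else 0)"

definition Xop :: "nat \<Rightarrow> (nat \<Rightarrow> complex) \<Rightarrow> (nat \<Rightarrow> complex)" where
  "Xop r a = (\<lambda>i. if i < r then of_nat (r - i) * a (i + 1) else 0)"

definition Hop :: "nat \<Rightarrow> (nat \<Rightarrow> complex) \<Rightarrow> (nat \<Rightarrow> complex)" where
  "Hop r a = (\<lambda>i. if i \<le> r then (of_int (int r - 2 * int i)) * a i else 0)"

text \<open>Tensors in V (x) V as coefficient functions T i j (coefficient of x_i (x) x_j);
  an operator acts on V (x) V as A (x) 1 + 1 (x) A.\<close>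

definition tens_op ::
  "((nat \<Rightarrow> complex) \<Rightarrow> (nat \<Rightarrow> complex)) \<Rightarrow> (nat \<Rightarrow> nat \<Rightarrow> complex) \<Rightarrow> (nat \<Rightarrow> nat \<Rightarrow> complex)" where
  "tens_op A T = (\<lambda>i j. A (\<lambda>i'. T i' j) i + A (\<lambda>j'. T i j') j)"

text \<open>S^2(V) realised as the symmetric tensors in V (x) V; the square x x of x is x (x) x.\<close>

definition sym2 :: "nat \<Rightarrow> (nat \<Rightarrow> nat \<Rightarrow> complex) set" where
  "sym2 r = {T. (\<forall>i j. T i j = T j i) \<and> (\<forall>i j. r < i \<or> r < j \<longrightarrow> T i j = 0)}"

definition sq :: "(nat \<Rightarrow> complex) \<Rightarrow> (nat \<Rightarrow> nat \<Rightarrow> complex)" where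
  "sq a = (\<lambda>i j. a i * a j)"

definition tspan :: "(nat \<Rightarrow> nat \<Rightarrow> complex) set \<Rightarrow> (nat \<Rightarrow> nat \<Rightarrow> complex) set" where
  "tspan S = {v. \<exists>F c. finite F \<and> F \<subseteq> S \<and> v = (\<lambda>i j. \<Sum>T\<in>F. c T * T i j)}"

definition hwv :: "nat \<Rightarrow> complex \<Rightarrow> (nat \<Rightarrow> nat \<Rightarrow> complex) set" where
  "hwv r w = {T \<in> sym2 r. tens_op (Xop r) T = (\<lambda>i j. 0) \<and> tens_op (Hop r) T = (\<lambda>i j. w * T i j)}"

text \<open>The summand of S^2(V) isomorphic to S^(2r-4k)(C^2): the submodule generated by the
  highest weight vectors of weight 2r - 4k.\<close>

definition summand :: "nat \<Rightarrow> nat \<Rightarrow> (nat \<Rightarrow> nat \<Rightarrow> complex) set" where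
  "summand r k = tspan {(tens_op (Yop r) ^^ j) T | j T. T \<in> hwv r (of_int (2 * int r - 4 * int k))}"

text \<open>f_m(x x) = 0 iff x x lies in the kernel of the projection onto the summand
  S^(2r-4m), i.e. in the sum of the other summands S^(2r-4k), k \<noteq> m, 4k \<le> 2r.\<close>

definition Mvar :: "nat \<Rightarrow> nat \<Rightarrow> (nat \<Rightarrow> complex) set" where
  "Mvar r m = {a \<in> PV r. sq a \<in> tspan (\<Union>k \<in> {k. 4 * k \<le> 2 * r \<and> k \<noteq> m}. summand r k)}"

definition monoms :: "nat \<Rightarrow> nat \<Rightarrow> (nat \<Rightarrow> nat) set" where
  "monoms r d = {\<alpha>. (\<forall>i>r. \<alpha> i = 0) \<and> (\<Sum>i\<le>r. \<alpha> i) = d}"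

definition hpoly :: "nat \<Rightarrow> nat \<Rightarrow> ((nat \<Rightarrow> nat) \<Rightarrow> complex) \<Rightarrow> (nat \<Rightarrow> complex) \<Rightarrow> complex" where
  "hpoly r d c a = (\<Sum>\<alpha>\<in>monoms r d. c \<alpha> * (\<Prod>i\<le>r. a i ^ \<alpha> i))"

definition zclosed :: "nat \<Rightarrow> (nat \<Rightarrow> complex) set \<Rightarrow> bool" where
  "zclosed r Z \<longleftrightarrow> (\<exists>F. Z = {a \<in> PV r. \<forall>(d, c) \<in> F. hpoly r d c a = 0})"

definition zclosure :: "nat \<Rightarrow> (nat \<Rightarrow> complex) set \<Rightarrow> (nat \<Rightarrow> complex) set" where
  "zclosure r S = \<Inter>{Z. zclosed r Z \<and> S \<inter> PV r \<subseteq> Z}"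

definition zirreducible :: "nat \<Rightarrow> (nat \<Rightarrow> complex) set \<Rightarrow> bool" where
  "zirreducible r Z \<longleftrightarrow> zclosed r Z \<and> Z \<noteq> {} \<and>
     (\<forall>A B. zclosed r A \<and> zclosed r B \<and> Z \<subseteq> A \<union> B \<longrightarrow> Z \<subseteq> A \<or> Z \<subseteq> B)"

definition zdim :: "nat \<Rightarrow> (nat \<Rightarrow> complex) set \<Rightarrow> enat" where
  "zdim r S = Sup {enat n | n. \<exists>Z. (\<forall>i\<le>n. zirreducible r (Z i)) \<and>
                                  (\<forall>i<n. Z i \<subset> Z (Suc i)) \<and> Z n \<subseteq> S}"

definition vcurve :: "nat \<Rightarrow> complex \<Rightarrow> (nat \<Rightarrow> complex)" where
  "vcurve r t = (\<lambda>i. if i \<le> r then t ^ i else 0)"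

definition vcurve_der :: "nat \<Rightarrow> nat \<Rightarrow> complex \<Rightarrow> (nat \<Rightarrow> complex)" where
  "vcurve_der r q t = (\<lambda>i. if i \<le> r then (deriv ^^ q) (\<lambda>s. s ^ i) t else 0)"

definition osc_image :: "nat \<Rightarrow> nat \<Rightarrow> (nat \<Rightarrow> complex) set" where
  "osc_image r p = {v. \<exists>t (lam::nat \<Rightarrow> complex).
      v = (\<lambda>i. vcurve r t i + (\<Sum>q\<in>{1..p}. lam q * vcurve_der r q t i))}"

definition osc :: "nat \<Rightarrow> nat \<Rightarrow> (nat \<Rightarrow> complex) set" where
  "osc r p = zclosure r (osc_image r p)"

end

(*
  M_m is cut out by the quadrics a \<mapsto> \<psi>(a a), \<psi> ranging over the functionals on S^2 that
  vanish on the sum W of the summands S^(2r-4k), k \<noteq> m; so it is closed. W is stable under Y,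
  hence under exp(tY), which carries the osculating spaces at t = 0 along the curve. A point of
  T^(m-1)c_r at t = 0 only involves x_0, ..., x_(m-1), so its square lives on the antidiagonals
  i + j < 2m of S^2, where every symmetric tensor is a combination of Y-translates of highest
  weight vectors of weight 2r - 4k with k < m, i.e. lies in W. Conversely, the point x_0 + x_m of
  T^m c_r is detected by the alternating binomial sum along the antidiagonal i + j = 2m, which
  vanishes on W. Since the osculating varieties are closures of images of polynomial maps, they
  are irreducible, and together with a point below T^0 c_r they form a strictly increasing chain
  of length m inside M_m.
*)

theory Submission
  imports Defs "HOL-Library.Function_Algebras"
begin

section \<open>Osculating points of the Veronese curve\<close>

lemma fact_binomial_Suc:
  "fact q * (i choose q) * (i - q) = (fact (Suc q) * (i choose Suc q) :: nat)"
proof (cases i)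
  case (Suc n)
  have "(Suc n - q) * (Suc n choose q) = Suc n * (n choose q)"
    using binomial_absorb_comp[of "Suc n" q] by simp
  also have "\<dots> = (Suc n choose Suc q) * Suc q"
    by (rule Suc_times_binomial_eq)
  finally show ?thesis
    using Suc by (simp add: algebra_simps)
qed simp

lemma higher_deriv_power:
  "(deriv ^^ q) (\<lambda>s. s ^ i) = (\<lambda>s::'a::real_normed_field. of_nat (fact q * (i choose q)) * s ^ (i - q))"
proof (induction q)
  case (Suc q)
  have deriv_step: "deriv (\<lambda>s::'a. of_nat (fact q * (i choose q)) * s ^ (i - q)) s
      = of_nat (fact (Suc q) * (i choose Suc q)) * s ^ (i - Suc q)" for s
  proof -
    have "((\<lambda>s::'a. of_nat (fact q * (i choose q)) * s ^ (i - q)) has_field_derivative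
        of_nat (fact q * (i choose q)) * (of_nat (i - q) * s ^ (i - q - 1))) (at s)"
      by (auto intro!: derivative_eq_intros)
    then show ?thesis
      by (simp add: DERIV_imp_deriv mult.assoc flip: of_nat_mult fact_binomial_Suc del: fact_Suc)
  qed
  show ?case
    by (simp only: funpow.simps comp_apply Suc.IH) (rule ext, rule deriv_step)
qed simp

lemma vcurve_der_eq:
  "vcurve_der r q t = (\<lambda>i. if i \<le> r then of_nat (fact q * (i choose q)) * t ^ (i - q) else 0)"
  unfolding vcurve_der_def higher_deriv_power by simp

definition osc_point :: "nat \<Rightarrow> nat \<Rightarrow> complex \<Rightarrow> (nat \<Rightarrow> complex) \<Rightarrow> (nat \<Rightarrow> complex)" where
  "osc_point r p t lam = (\<lambda>i. vcurve r t i + (\<Sum>q\<in>{1..p}. lam q * vcurve_der r q t i))"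

lemma osc_image_eq: "osc_image r p = {osc_point r p t lam | t lam. True}"
  unfolding osc_image_def osc_point_def by blast

lemma osc_point_eq:
  "osc_point r p t lam = (\<lambda>i. if i \<le> r
     then t ^ i + (\<Sum>q\<in>{1..p}. lam q * of_nat (fact q * (i choose q)) * t ^ (i - q)) else 0)"
  unfolding osc_point_def vcurve_def vcurve_der_eq by (simp add: fun_eq_iff mult.assoc)

lemma osc_point_PV: "osc_point r p t lam \<in> PV r"
proof -
  have "osc_point r p t lam 0 = 1"
    by (simp add: osc_point_eq binomial_eq_0)
  moreover have "\<forall>i>r. osc_point r p t lam i = 0"
    by (simp add: osc_point_eq)
  ultimately show ?thesis
    unfolding PV_def by force
qed

lemma osc_point_Suc: "osc_point r p t lam = osc_point r (Suc p) t (lam(Suc p := 0))"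
  unfolding osc_point_eq by (auto intro!: sum.cong)

lemma osc_point_zero:
  "osc_point r p 0 lam i = (if i = 0 then 1 else if i \<le> p \<and> i \<le> r then lam i * fact i else 0)"
proof -
  have "(\<Sum>q\<in>{1..p}. lam q * of_nat (fact q * (i choose q)) * 0 ^ (i - q))
      = (\<Sum>q\<in>{1..p}. if q = i then lam i * fact i else 0)"
    by (rule sum.cong) (auto simp: binomial_eq_0)
  then show ?thesis
    by (simp add: osc_point_eq binomial_eq_0)
qed

lemma vcurve_PV: "vcurve r t \<in> PV r"
  unfolding PV_def vcurve_def by force

section \<open>Zariski closure\<close>

lemma zclosure_superset: "S \<inter> PV r \<subseteq> zclosure r S"
  unfolding zclosure_def by blast

lemma zclosure_least: "zclosed r Z \<Longrightarrow> S \<inter> PV r \<subseteq> Z \<Longrightarrow> zclosure r S \<subseteq> Z"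
  unfolding zclosure_def by blast

lemma zclosure_mono: "S \<subseteq> S' \<Longrightarrow> zclosure r S \<subseteq> zclosure r S'"
  unfolding zclosure_def by blast

lemma zclosed_PV: "zclosed r (PV r)"
  unfolding zclosed_def by (rule exI[of _ "{}"]) auto

lemma zclosed_Inter:
  assumes "\<And>Z. Z \<in> Zs \<Longrightarrow> zclosed r Z"
  shows "zclosed r (PV r \<inter> \<Inter>Zs)"
proof -
  have "\<forall>Z\<in>Zs. \<exists>F. Z = {a \<in> PV r. \<forall>(d, c) \<in> F. hpoly r d c a = 0}"
    using assms by (simp add: zclosed_def)
  then obtain F where F: "\<forall>Z\<in>Zs. Z = {a \<in> PV r. \<forall>(d, c) \<in> F Z. hpoly r d c a = 0}"
    by (rule bchoice[THEN exE])
  have mem: "a \<in> Z \<longleftrightarrow> a \<in> PV r \<and> (\<forall>(d, c) \<in> F Z. hpoly r d c a = 0)" if "Z \<in> Zs" for a Z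
    using F that by blast
  have "PV r \<inter> \<Inter>Zs = {a \<in> PV r. \<forall>(d, c) \<in> (\<Union>Z\<in>Zs. F Z). hpoly r d c a = 0}"
    using mem by blast
  then show ?thesis
    unfolding zclosed_def by blast
qed

lemma zclosed_zclosure: "zclosed r (zclosure r S)"
proof -
  let ?Zs = "{Z. zclosed r Z \<and> S \<inter> PV r \<subseteq> Z}"
  have "zclosed r (PV r \<inter> \<Inter>?Zs)"
    by (rule zclosed_Inter) blast
  moreover have "PV r \<inter> \<Inter>?Zs = zclosure r S"
    using zclosed_PV unfolding zclosure_def by blast
  ultimately show ?thesis
    by simp
qed

lemma finite_monoms: "finite (monoms r d)"
proof -
  have "monoms r d \<subseteq> (\<lambda>f i. if i \<le> r then f i else 0) ` PiE {..r} (\<lambda>_. {..d})"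
  proof
    fix \<alpha> assume "\<alpha> \<in> monoms r d"
    then have z: "\<forall>i>r. \<alpha> i = 0" and s: "(\<Sum>i\<le>r. \<alpha> i) = d"
      by (auto simp: monoms_def)
    have "\<alpha> i \<le> d" if "i \<le> r" for i
      using member_le_sum[of i "{..r}" \<alpha>] that s by simp
    then have "restrict \<alpha> {..r} \<in> PiE {..r} (\<lambda>_. {..d})"
      by auto
    moreover have "\<alpha> = (\<lambda>i. if i \<le> r then restrict \<alpha> {..r} i else 0)"
      using z by (auto simp: fun_eq_iff)
    ultimately show "\<alpha> \<in> (\<lambda>f i. if i \<le> r then f i else 0) ` PiE {..r} (\<lambda>_. {..d})"
      by blast
  qed
  then show ?thesis
    by (rule finite_subset) (auto intro: finite_PiE)
qed

lemma zclosed_coordinate_hyperplane: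
  assumes "i \<le> r"
  shows "zclosed r {a \<in> PV r. a i = 0}"
proof -
  define e :: "nat \<Rightarrow> nat" where "e l = (if l = i then 1 else 0)" for l
  define c :: "(nat \<Rightarrow> nat) \<Rightarrow> complex" where "c \<alpha> = (if \<alpha> = e then 1 else 0)" for \<alpha>
  have "e \<in> monoms r 1"
    using assms by (simp add: monoms_def e_def)
  have "hpoly r 1 c a = a i" for a
  proof -
    have "hpoly r 1 c a = (\<Sum>\<alpha>\<in>monoms r 1. if \<alpha> = e then \<Prod>l\<le>r. a l ^ \<alpha> l else 0)"
      unfolding hpoly_def c_def by (intro sum.cong) auto
    also have "\<dots> = (\<Prod>l\<le>r. a l ^ e l)"
      using \<open>e \<in> monoms r 1\<close> by (simp add: finite_monoms)
    also have "\<dots> = (\<Prod>l\<le>r. if l = i then a l else 1)"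
      by (intro prod.cong) (auto simp: e_def)
    finally show ?thesis
      using assms by simp
  qed
  then have "{a \<in> PV r. a i = 0} = {a \<in> PV r. \<forall>(d, c') \<in> {(1, c)}. hpoly r d c' a = 0}"
    by simp
  then show ?thesis
    unfolding zclosed_def by blast
qed

lemma osc_point_osc: "osc_point r p t lam \<in> osc r p"
  using zclosure_superset[of "osc_image r p" r] osc_point_PV
  unfolding osc_def osc_image_eq by blast

lemma osc_mono: "osc r p \<subseteq> osc r (Suc p)"
  unfolding osc_def osc_image_eq by (rule zclosure_mono) (use osc_point_Suc in blast)

definition tscale :: "complex \<Rightarrow> (nat \<Rightarrow> nat \<Rightarrow> complex) \<Rightarrow> (nat \<Rightarrow> nat \<Rightarrow> complex)" where
  "tscale c T = (\<lambda>i j. c * T i j)"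

interpretation tens: vector_space tscale
  by unfold_locales (auto simp: tscale_def fun_eq_iff algebra_simps)

interpretation tens_dual: vector_space_pair tscale "(*) :: complex \<Rightarrow> complex \<Rightarrow> complex"
  by unfold_locales (auto simp: tscale_def fun_eq_iff algebra_simps)

interpretation tens_endo: vector_space_pair tscale tscale
  by unfold_locales

lemma sum_fun_apply2: "sum f A i j = (\<Sum>x\<in>A. f x i j)"
  by (induction A rule: infinite_finite_induct) auto

lemma tspan_eq_span: "tspan S = tens.span S"
  unfolding tspan_def tens.span_explicit by (auto simp: fun_eq_iff sum_fun_apply2 tscale_def)

abbreviation Ytens :: "nat \<Rightarrow> (nat \<Rightarrow> nat \<Rightarrow> complex) \<Rightarrow> (nat \<Rightarrow> nat \<Rightarrow> complex)" where
  "Ytens r \<equiv> tens_op (Yop r)"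

lemma Ytens_apply:
  "Ytens r U i j = (if 1 \<le> i \<and> i \<le> r then of_nat i * U (i - 1) j else 0)
     + (if 1 \<le> j \<and> j \<le> r then of_nat j * U i (j - 1) else 0)"
  by (simp add: tens_op_def Yop_def)

lemma linear_Ytens: "Vector_Spaces.linear tscale tscale (Ytens r)"
  unfolding Vector_Spaces.linear_iff
  by (auto simp: Ytens_apply fun_eq_iff tscale_def algebra_simps tens.vector_space_axioms)

definition antidiag :: "nat \<Rightarrow> (nat \<Rightarrow> nat \<Rightarrow> complex) \<Rightarrow> bool" where
  "antidiag s U \<longleftrightarrow> (\<forall>i j. i + j \<noteq> s \<longrightarrow> U i j = 0)"

lemma antidiag_Ytens: "antidiag s U \<Longrightarrow> antidiag (Suc s) (Ytens r U)"
  unfolding antidiag_def Ytens_apply by auto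

lemma antidiag_Ytens_pow: "antidiag s U \<Longrightarrow> antidiag (s + n) ((Ytens r ^^ n) U)"
  by (induction n) (auto intro: antidiag_Ytens)

text \<open>On the antidiagonal s \<le> r this is, up to scaling, the only functional killing the image of Y.\<close>

definition alt_sum :: "nat \<Rightarrow> (nat \<Rightarrow> nat \<Rightarrow> complex) \<Rightarrow> complex" where
  "alt_sum s U = (\<Sum>i\<le>s. (-1) ^ i * of_nat (s choose i) * U i (s - i))"

lemma linear_alt_sum: "Vector_Spaces.linear tscale (*) (alt_sum s)"
  unfolding Vector_Spaces.linear_iff
  by (auto simp: alt_sum_def tscale_def algebra_simps sum.distrib sum_distrib_left
      tens.vector_space_axioms vector_space_over_itself.vector_space_axioms)

lemma alt_sum_antidiag: "antidiag s U \<Longrightarrow> s \<noteq> t \<Longrightarrow> alt_sum t U = 0"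
  unfolding antidiag_def alt_sum_def by (intro sum.neutral) auto

lemma alt_sum_diff: "alt_sum s (S - tscale c T) = alt_sum s S - c * alt_sum s T"
  unfolding alt_sum_def tscale_def by (simp add: sum_subtractf sum_distrib_left algebra_simps)

lemma binomial_Suc_Suc_mult:
  "i \<le> n \<Longrightarrow> (Suc n choose Suc i) * Suc i = (Suc n choose i) * (Suc n - i)"
  using Suc_times_binomial_add[of i "n - i"] by (simp add: Suc_diff_le mult.commute)

lemma alt_sum_Ytens:
  assumes "s \<le> r"
  shows "alt_sum s (Ytens r U) = 0"
proof (cases s)
  case (Suc n)
  define a where "a i = (-1) ^ i * of_nat (s choose i) *
      (if 1 \<le> i then of_nat i * U (i - 1) (s - i) else 0)" for i
  define b where "b i = (-1) ^ i * of_nat (s choose i) *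
      (if 1 \<le> s - i then of_nat (s - i) * U i (s - i - 1) else (0::complex))" for i
  have "alt_sum s (Ytens r U) = (\<Sum>i\<le>s. a i) + (\<Sum>i\<le>s. b i)"
    unfolding alt_sum_def a_def b_def sum.distrib[symmetric] using assms
    by (intro sum.cong) (auto simp: Ytens_apply algebra_simps)
  also have "(\<Sum>i\<le>s. a i) = (\<Sum>i\<le>n. a (Suc i))"
    unfolding Suc by (subst sum.atMost_Suc_shift) (simp add: a_def)
  also have "(\<Sum>i\<le>s. b i) = (\<Sum>i\<le>n. b i)"
    using Suc by (simp add: b_def)
  also have "(\<Sum>i\<le>n. a (Suc i)) + (\<Sum>i\<le>n. b i) = (\<Sum>i\<le>n. a (Suc i) + b i)"
    by (simp add: sum.distrib)
  also have "\<dots> = 0"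
  proof (intro sum.neutral ballI)
    fix i assume "i \<in> {..n}"
    then have i: "i \<le> n" by simp
    have "a (Suc i) = - ((-1) ^ i * of_nat ((Suc n choose Suc i) * Suc i) * U i (s - i - 1))"
      unfolding a_def Suc by (simp add: algebra_simps)
    also have "\<dots> = - ((-1) ^ i * of_nat (Suc n choose i) * (of_nat (Suc n - i) * U i (s - i - 1)))"
      unfolding binomial_Suc_Suc_mult[OF i] of_nat_mult by (simp only: mult_ac)
    also have "\<dots> = - b i"
      unfolding b_def Suc using i by (simp add: Suc_diff_le)
    finally show "a (Suc i) + b i = 0" by simp
  qed
  finally show ?thesis .
qed (simp add: alt_sum_def Ytens_apply)

section \<open>The span of the other summands\<close>

definition Mgens :: "nat \<Rightarrow> nat \<Rightarrow> (nat \<Rightarrow> nat \<Rightarrow> complex) set" where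
  "Mgens r m = {(Ytens r ^^ n) T | n T k.
     4 * k \<le> 2 * r \<and> k \<noteq> m \<and> T \<in> hwv r (of_int (2 * int r - 4 * int k))}"

lemma span_Union_span: "tens.span (\<Union>k\<in>A. tens.span (B k)) = tens.span (\<Union>k\<in>A. B k)"
  by (rule tens.span_eq[THEN iffD2])
    (auto intro: tens.span_superset[THEN subsetD] tens.span_mono[THEN subsetD, rotated])

lemma Mvar_eq_span: "Mvar r m = {a \<in> PV r. sq a \<in> tens.span (Mgens r m)}"
proof -
  have "(\<Union>k\<in>{k. 4 * k \<le> 2 * r \<and> k \<noteq> m}.
      {(Ytens r ^^ n) T | n T. T \<in> hwv r (of_int (2 * int r - 4 * int k))}) = Mgens r m"
    unfolding Mgens_def by blast
  then show ?thesis
    unfolding Mvar_def summand_def tspan_eq_span span_Union_span by simp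
qed

lemma Ytens_span_Mgens:
  assumes "U \<in> tens.span (Mgens r m)"
  shows "Ytens r U \<in> tens.span (Mgens r m)"
proof -
  have "Ytens r ` Mgens r m \<subseteq> Mgens r m"
    unfolding Mgens_def by clarsimp (metis funpow.simps(2) comp_apply)
  then have "tens.span (Ytens r ` Mgens r m) \<subseteq> tens.span (Mgens r m)"
    by (rule tens.span_mono)
  then show ?thesis
    using assms tens_endo.linear_span_image[OF linear_Ytens] by blast
qed

lemma Ytens_pow_span_Mgens:
  "U \<in> tens.span (Mgens r m) \<Longrightarrow> (Ytens r ^^ n) U \<in> tens.span (Mgens r m)"
  by (induction n) (auto intro: Ytens_span_Mgens)

lemma antidiag_hwv:
  assumes "T \<in> hwv r (of_int (2 * int r - 4 * int k))"
  shows "antidiag (2 * k) T"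
  unfolding antidiag_def
proof (intro allI impI)
  fix i j assume ij: "i + j \<noteq> 2 * k"
  show "T i j = 0"
  proof (cases "r < i \<or> r < j")
    case True
    then show ?thesis using assms by (auto simp: hwv_def sym2_def)
  next
    case False
    have "tens_op (Hop r) T i j = of_int (2 * int r - 4 * int k) * T i j"
      using assms by (auto simp: hwv_def)
    then have "of_int (int r - 2 * int i + (int r - 2 * int j) - (2 * int r - 4 * int k)) * T i j = 0"
      using False by (simp add: tens_op_def Hop_def algebra_simps)
    moreover have "int r - 2 * int i + (int r - 2 * int j) - (2 * int r - 4 * int k) \<noteq> 0"
      using ij by linarith
    ultimately show ?thesis
      by (simp del: of_int_diff of_int_add of_int_mult)
  qed
qed

text \<open>Y^n T with T of weight 2r - 4k lies on the antidiagonal 2k + n; on the antidiagonal 2m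
  this forces n > 0, as k \<noteq> m.\<close>

lemma alt_sum_Mgens:
  assumes "2 * m \<le> r" "U \<in> Mgens r m"
  shows "alt_sum (2 * m) U = 0"
proof -
  obtain n T k where U: "U = (Ytens r ^^ n) T" and "k \<noteq> m"
    and T: "T \<in> hwv r (of_int (2 * int r - 4 * int k))"
    using assms(2) unfolding Mgens_def by blast
  have "antidiag (2 * k + n) U"
    unfolding U by (rule antidiag_Ytens_pow[OF antidiag_hwv[OF T]])
  show ?thesis
  proof (cases "2 * k + n = 2 * m")
    case True
    with \<open>k \<noteq> m\<close> obtain n' where "n = Suc n'" by (cases n) auto
    then have "U = Ytens r ((Ytens r ^^ n') T)"
      using U by simp
    then show ?thesis
      using assms(1) by (simp add: alt_sum_Ytens)
  qed (rule alt_sum_antidiag[OF \<open>antidiag (2 * k + n) U\<close>])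
qed

lemma alt_sum_span_Mgens:
  "2 * m \<le> r \<Longrightarrow> U \<in> tens.span (Mgens r m) \<Longrightarrow> alt_sum (2 * m) U = 0"
  by (rule tens_dual.linear_eq_0_on_span[OF linear_alt_sum]) (auto intro: alt_sum_Mgens)

text \<open>The witness is x_0 + x_m, the point at t = 0 with \<lambda>_m = 1/m!: its square has nonzero
  alternating sum on the antidiagonal 2m.\<close>

lemma osc_not_subset_Mvar:
  assumes "1 \<le> m" "2 * m \<le> r"
  shows "\<not> osc r m \<subseteq> Mvar r m"
proof
  assume sub: "osc r m \<subseteq> Mvar r m"
  define lam :: "nat \<Rightarrow> complex" where "lam q = (if q = m then 1 / fact m else 0)" for q
  define a where "a = osc_point r m 0 lam"
  have a_eq: "a i = (if i = 0 \<or> i = m then 1 else 0)" for i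
    using assms by (auto simp: a_def osc_point_zero lam_def)
  have "sq a \<in> tens.span (Mgens r m)"
    using sub osc_point_osc[of r m 0 lam] by (auto simp: a_def Mvar_eq_span)
  then have "alt_sum (2 * m) (sq a) = 0"
    using alt_sum_span_Mgens assms(2) by blast
  moreover have "alt_sum (2 * m) (sq a)
      = (\<Sum>i\<le>2 * m. if i = m then (-1) ^ m * of_nat (2 * m choose m) else 0)"
    unfolding alt_sum_def sq_def a_eq using assms(1) by (intro sum.cong) auto
  ultimately show False
    by simp
qed

section \<open>Symmetric tensors on low antidiagonals\<close>

text \<open>X kills it because (r - i) T(i+1, j) = -(r - j) T(i, j+1) along the antidiagonal.\<close>

definition hw_tensor :: "nat \<Rightarrow> nat \<Rightarrow> (nat \<Rightarrow> nat \<Rightarrow> complex)" where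
  "hw_tensor r k = (\<lambda>i j. if i + j = 2 * k then (-1) ^ i * fact (r - i) * fact (r - j) else 0)"

lemma antidiag_hw_tensor: "antidiag (2 * k) (hw_tensor r k)"
  by (simp add: antidiag_def hw_tensor_def)

lemma of_nat_mult_fact_diff_Suc:
  "i < r \<Longrightarrow> of_nat (r - i) * fact (r - Suc i) = (fact (r - i) :: 'a::semiring_char_0)"
  by (metis Suc_diff_Suc fact_Suc of_nat_fact of_nat_mult)

lemma hw_tensor_hwv:
  assumes "2 * k \<le> r"
  shows "hw_tensor r k \<in> hwv r (of_int (2 * int r - 4 * int k))"
  unfolding hwv_def
proof (intro CollectI conjI)
  have "(-1::complex) ^ i = (-1) ^ j" if "i + j = 2 * k" for i j
  proof -
    have "even i \<longleftrightarrow> even j"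
      using that by presburger
    then show ?thesis
      by (simp add: minus_one_power_iff)
  qed
  then show "hw_tensor r k \<in> sym2 r"
    using assms unfolding sym2_def hw_tensor_def by (auto simp: add.commute mult.commute)
  show "tens_op (Xop r) (hw_tensor r k) = (\<lambda>i j. 0)"
  proof (intro ext)
    fix i j
    show "tens_op (Xop r) (hw_tensor r k) i j = 0"
    proof (cases "Suc (i + j) = 2 * k")
      case True
      then have ir: "i < r" "j < r"
        using assms by auto
      have "tens_op (Xop r) (hw_tensor r k) i j =
          (-1) ^ i * (- (of_nat (r - i) * fact (r - Suc i)) * fact (r - j)
            + fact (r - i) * (of_nat (r - j) * fact (r - Suc j)))"
        using ir True by (simp add: tens_op_def Xop_def hw_tensor_def algebra_simps)
      then show ?thesis
        unfolding of_nat_mult_fact_diff_Suc[OF ir(1)] of_nat_mult_fact_diff_Suc[OF ir(2)] by simp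
    qed (simp add: tens_op_def Xop_def hw_tensor_def)
  qed
  show "tens_op (Hop r) (hw_tensor r k) = (\<lambda>i j. of_int (2 * int r - 4 * int k) * hw_tensor r k i j)"
  proof (intro ext)
    fix i j
    show "tens_op (Hop r) (hw_tensor r k) i j = of_int (2 * int r - 4 * int k) * hw_tensor r k i j"
    proof (cases "i + j = 2 * k")
      case True
      then have "i \<le> r" "j \<le> r"
        using assms by auto
      then have "tens_op (Hop r) (hw_tensor r k) i j
          = of_int (int r - 2 * int i + (int r - 2 * int j)) * hw_tensor r k i j"
        by (simp add: tens_op_def Hop_def algebra_simps)
      also have "int r - 2 * int i + (int r - 2 * int j) = 2 * int r - 4 * int k"
        using True by linarith
      finally show ?thesis .
    qed (simp add: tens_op_def Hop_def hw_tensor_def)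
  qed
qed

lemma hw_tensor_Mgens: "2 * k \<le> r \<Longrightarrow> k \<noteq> m \<Longrightarrow> hw_tensor r k \<in> Mgens r m"
  unfolding Mgens_def using hw_tensor_hwv by (fastforce intro: exI[of _ 0])

lemma alt_sum_hw_tensor: "alt_sum (2 * k) (hw_tensor r k) \<noteq> 0"
proof -
  define N :: nat where "N = (\<Sum>i\<le>2 * k. (2 * k choose i) * fact (r - i) * fact (r - (2 * k - i)))"
  have "alt_sum (2 * k) (hw_tensor r k) = of_nat N"
    unfolding alt_sum_def hw_tensor_def N_def of_nat_sum
    by (intro sum.cong refl) (simp add: algebra_simps flip: power_add mult_2)
  moreover have "0 < N"
    unfolding N_def by (rule sum_pos2[where i = 0]) auto
  ultimately show ?thesis
    by simp
qed

lemma alt_sum_odd: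
  assumes sym: "\<And>i j. S i j = S j i" and "odd s"
  shows "alt_sum s S = 0"
proof -
  have "alt_sum s S = (\<Sum>i\<le>s. (-1) ^ (s - i) * of_nat (s choose (s - i)) * S (s - i) (s - (s - i)))"
    unfolding alt_sum_def atMost_atLeast0 by (subst sum.atLeastAtMost_rev) simp
  also have "\<dots> = (\<Sum>i\<le>s. - ((-1) ^ i * of_nat (s choose i) * S i (s - i)))"
  proof (intro sum.cong refl)
    fix i assume "i \<in> {..s}"
    then have i: "i \<le> s" by simp
    have "even (s - i) \<longleftrightarrow> odd i"
      using i \<open>odd s\<close> by presburger
    then have "(-1::complex) ^ (s - i) = - ((-1) ^ i)"
      by (simp add: minus_one_power_iff)
    then show "(-1) ^ (s - i) * of_nat (s choose (s - i)) * S (s - i) (s - (s - i))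
        = - ((-1) ^ i * of_nat (s choose i) * S i (s - i))"
      using i by (simp add: binomial_symmetric[OF i, symmetric] sym[of "s - i" i])
  qed
  also have "\<dots> = - alt_sum s S"
    unfolding alt_sum_def by (simp add: sum_negf)
  finally show ?thesis
    by simp
qed

primrec alt_accum :: "(nat \<Rightarrow> 'a::ab_group_add) \<Rightarrow> nat \<Rightarrow> 'a" where
  "alt_accum g 0 = g 0"
| "alt_accum g (Suc i) = g (Suc i) - alt_accum g i"

lemma alt_accum_eq: "(-1) ^ i * alt_accum g i = (\<Sum>l\<le>i. (-1) ^ l * (g l :: 'a::comm_ring_1))"
  by (induction i) (simp_all add: algebra_simps)

lemma Ytens_apply_factorial_weights:
  assumes "i + j = s" "s \<le> r"
    and U: "\<And>i j. i + j + 1 = s \<Longrightarrow> U i j = fact i * fact j * w i"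
  shows "Ytens r U i j = fact i * fact j * ((if 1 \<le> i then w (i - 1) else 0) + (if 1 \<le> j then w i else 0))"
proof -
  have "(if 1 \<le> i \<and> i \<le> r then of_nat i * U (i - 1) j else 0) = (if 1 \<le> i then fact i * fact j * w (i - 1) else 0)"
    using assms by (auto simp: U fact_reduce[of i])
  moreover have "(if 1 \<le> j \<and> j \<le> r then of_nat j * U i (j - 1) else 0) = (if 1 \<le> j then fact i * fact j * w i else 0)"
    using assms by (auto simp: U fact_reduce[of j])
  ultimately show ?thesis
    unfolding Ytens_apply by (simp add: algebra_simps)
qed

text \<open>Solving Y U = S along the antidiagonal is the recursion defining alt_accum; its last
  equation is the vanishing of the alternating sum.\<close>

lemma Ytens_preimage:
  assumes s: "1 \<le> s" "s \<le> r" and S: "antidiag s S" "alt_sum s S = 0"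
  shows "\<exists>U. antidiag (s - 1) U \<and> Ytens r U = S"
proof -
  obtain n where n: "s = Suc n"
    using s by (cases s) auto
  define g where "g l = S l (s - l) / (fact l * fact (s - l))" for l
  define U where "U i j = (if i + j + 1 = s then fact i * fact j * alt_accum g i else 0)" for i j
  have S_eq: "S l (s - l) = fact l * fact (s - l) * g l" for l
    by (simp add: g_def)
  have "(\<Sum>l\<le>s. (-1) ^ l * g l) * fact s = alt_sum s S"
    unfolding alt_sum_def sum_distrib_right
  proof (intro sum.cong refl)
    fix l assume "l \<in> {..s}"
    then have "(of_nat (s choose l) :: complex) * (fact l * fact (s - l)) = fact s"
      using binomial_fact[of l s, where 'a = complex] by simp
    then show "(-1) ^ l * g l * fact s = (-1) ^ l * of_nat (s choose l) * S l (s - l)"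
      unfolding S_eq by (simp add: algebra_simps)
  qed
  then have "(\<Sum>l\<le>s. (-1) ^ l * g l) = 0"
    using S(2) by simp
  then have last_eq: "alt_accum g n = g s"
    using alt_accum_eq[of n g] n by (simp add: algebra_simps)
  have "Ytens r U i j = S i j" for i j
  proof (cases "i + j = s")
    case True
    have "Ytens r U i j = fact i * fact j * ((if 1 \<le> i then alt_accum g (i - 1) else 0)
        + (if 1 \<le> j then alt_accum g i else 0))"
      by (rule Ytens_apply_factorial_weights[OF True s(2)]) (simp add: U_def)
    also have "\<dots> = fact i * fact j * g i"
      using True n last_eq by (cases i; cases j) auto
    also have "\<dots> = S i j"
      using S_eq[of i] True by auto
    finally show ?thesis .
  next
    case False
    then have "S i j = 0"
      using S(1) by (simp add: antidiag_def)
    moreover have "Ytens r U i j = 0"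
      using False s unfolding Ytens_apply U_def by auto
    ultimately show ?thesis
      by simp
  qed
  moreover have "antidiag (s - 1) U"
    unfolding antidiag_def U_def using s by auto
  ultimately show ?thesis
    by blast
qed

definition tsym :: "(nat \<Rightarrow> nat \<Rightarrow> complex) \<Rightarrow> (nat \<Rightarrow> nat \<Rightarrow> complex)" where
  "tsym U = (\<lambda>i j. (U i j + U j i) / 2)"

lemma Ytens_tsym: "Ytens r (tsym U) = tsym (Ytens r U)"
  unfolding tsym_def Ytens_apply by (auto simp: fun_eq_iff field_simps)

lemma tsym_sym2: "S \<in> sym2 r \<Longrightarrow> tsym S = S"
  by (simp add: fun_eq_iff tsym_def sym2_def)

lemma antidiag_tsym: "antidiag s U \<Longrightarrow> antidiag s (tsym U)"
  by (simp add: antidiag_def tsym_def add.commute)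

lemma tsym_antidiag_sym2:
  "antidiag s U \<Longrightarrow> s \<le> r \<Longrightarrow> tsym U \<in> sym2 r"
  by (auto simp: sym2_def antidiag_def tsym_def add.commute)

lemma sym2_diff_tscale: "S \<in> sym2 r \<Longrightarrow> T \<in> sym2 r \<Longrightarrow> S - tscale c T \<in> sym2 r"
  by (simp add: sym2_def tscale_def)

lemma alt_sum_reduce:
  assumes "S \<in> sym2 r"
  obtains c where "alt_sum s (S - tscale c (hw_tensor r (s div 2))) = 0" "odd s \<Longrightarrow> c = 0"
proof (cases "even s")
  case True
  then have "alt_sum s (hw_tensor r (s div 2)) \<noteq> 0"
    using alt_sum_hw_tensor[of "s div 2" r] by simp
  then show ?thesis
    using True by (intro that[of "alt_sum s S / alt_sum s (hw_tensor r (s div 2))"]) (auto simp: alt_sum_diff)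
next
  case False
  then show ?thesis
    using alt_sum_odd[of S s] assms by (intro that[of 0]) (auto simp: alt_sum_diff sym2_def)
qed

text \<open>Subtracting a multiple of the highest weight vector of weight 2r - 2s kills the alternating
  sum, and the rest is in the image of Y. As s < 2m, that weight is never the excluded 2r - 4m.\<close>

lemma sym_antidiag_span_Mgens:
  assumes "2 * m \<le> r"
  shows "s < 2 * m \<Longrightarrow> S \<in> sym2 r \<Longrightarrow> antidiag s S \<Longrightarrow> S \<in> tens.span (Mgens r m)"
proof (induction s arbitrary: S rule: less_induct)
  case (less s)
  define H where "H = hw_tensor r (s div 2)"
  obtain c where c: "alt_sum s (S - tscale c H) = 0" "odd s \<Longrightarrow> c = 0"
    using alt_sum_reduce[OF less.prems(2)] unfolding H_def by blast
  have "H \<in> sym2 r"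
    using hw_tensor_hwv[of "s div 2" r] less.prems assms by (auto simp: H_def hwv_def)
  moreover have "antidiag s (tscale c H)"
  proof (cases "even s")
    case True
    then show ?thesis
      using antidiag_hw_tensor[of "s div 2" r] by (simp add: H_def antidiag_def tscale_def)
  qed (simp add: c(2) antidiag_def tscale_def)
  ultimately have H: "H \<in> sym2 r" "antidiag s (tscale c H)" .
  have "tscale c H \<in> tens.span (Mgens r m)"
  proof (cases "even s")
    case True
    have "H \<in> Mgens r m"
      unfolding H_def using True less.prems assms by (intro hw_tensor_Mgens) auto
    then show ?thesis
      by (intro tens.span_scale tens.span_base)
  qed (simp add: c(2) tens.span_zero)
  moreover have "S - tscale c H \<in> tens.span (Mgens r m)" (is "?S' \<in> _")
  proof -
    have S': "?S' \<in> sym2 r" "antidiag s ?S'"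
      using H less.prems by (auto simp: sym2_diff_tscale antidiag_def)
    show ?thesis
    proof (cases "s = 0")
      case True
      then have "?S' = 0"
        using S'(2) c(1) by (auto simp: fun_eq_iff antidiag_def alt_sum_def) (metis gr0I)
      then show ?thesis
        by (simp add: tens.span_zero)
    next
      case False
      then obtain U where U: "antidiag (s - 1) U" "Ytens r U = ?S'"
        using Ytens_preimage[of s r ?S'] S' c(1) less.prems assms by auto
      have "tsym U \<in> tens.span (Mgens r m)"
        using False less.prems assms
        by (intro less.IH[of "s - 1"] tsym_antidiag_sym2[of "s - 1"] antidiag_tsym U(1)) auto
      then have "Ytens r (tsym U) \<in> tens.span (Mgens r m)"
        by (rule Ytens_span_Mgens)
      then show ?thesis
        by (simp add: Ytens_tsym U(2) tsym_sym2[OF S'(1)])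
    qed
  qed
  ultimately show ?case
    using tens.span_add by fastforce
qed

lemma sq_span_Mgens:
  assumes "1 \<le> m" "2 * m \<le> r" and b: "\<forall>i\<ge>m. b i = 0"
  shows "sq b \<in> tens.span (Mgens r m)"
proof -
  define P where "P s = (\<lambda>i j. if i + j = s then b i * b j else 0)" for s
  have "sq b = (\<Sum>s<2 * m - 1. P s)"
  proof (intro ext)
    fix i j
    have "(\<Sum>s<2 * m - 1. P s) i j = (if i + j < 2 * m - 1 then b i * b j else 0)"
      unfolding sum_fun_apply2 P_def by (simp add: sum.delta)
    also have "\<dots> = sq b i j"
    proof (cases "i + j < 2 * m - 1")
      case False
      then have "m \<le> i \<or> m \<le> j"
        by linarith
      then show ?thesis
        using b False by (auto simp: sq_def)
    qed (simp add: sq_def)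
    finally show "sq b i j = (\<Sum>s<2 * m - 1. P s) i j" ..
  qed
  also have "\<dots> \<in> tens.span (Mgens r m)"
  proof (intro tens.span_sum sym_antidiag_span_Mgens[OF assms(2)])
    fix s assume "s \<in> {..<2 * m - 1}"
    then show "s < 2 * m" by simp
    show "P s \<in> sym2 r"
      unfolding sym2_def P_def using b assms by (auto simp: add.commute mult.commute)
    show "antidiag s (P s)"
      unfolding antidiag_def P_def by simp
  qed
  finally show ?thesis .
qed

section \<open>Translation along the curve\<close>

lemma Yop_pow_apply:
  assumes "\<forall>i>r. b i = 0"
  shows "(Yop r ^^ n) b i = (if n \<le> i \<and> i \<le> r then of_nat (fact n * (i choose n)) * b (i - n) else 0)"
proof (induction n arbitrary: i)
  case (Suc n)
  have step: "(Yop r ^^ Suc n) b i = (if 1 \<le> i \<and> i \<le> r then of_nat i * (Yop r ^^ n) b (i - 1) else 0)"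
    by (simp only: funpow.simps comp_apply Yop_def[of r "(Yop r ^^ n) b"])
  show ?case
  proof (cases "Suc n \<le> i \<and> i \<le> r")
    case True
    then obtain i' where i: "i = Suc i'"
      by (cases i) auto
    have "i * (fact n * (i' choose n)) = fact n * (Suc i' * (i' choose n))"
      by (simp add: i algebra_simps)
    also have "Suc i' * (i' choose n) = Suc n * (Suc i' choose Suc n)"
      by (rule Suc_times_binomial[symmetric])
    finally have "i * (fact n * (i' choose n)) = fact (Suc n) * (i choose Suc n)"
      by (simp add: i algebra_simps)
    then have "(of_nat i :: complex) * of_nat (fact n * (i' choose n)) = of_nat (fact (Suc n) * (i choose Suc n))"
      by (metis of_nat_mult)
    then show ?thesis
      unfolding step Suc.IH using True by (simp add: i del: of_nat_mult)
  qed (unfold step Suc.IH, auto)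
qed (use assms in auto)

definition outer :: "(nat \<Rightarrow> complex) \<Rightarrow> (nat \<Rightarrow> complex) \<Rightarrow> (nat \<Rightarrow> nat \<Rightarrow> complex)" where
  "outer u v = (\<lambda>i j. u i * v j)"

lemma sq_eq_outer: "sq a = outer a a"
  by (simp add: sq_def outer_def)

lemma Ytens_outer: "Ytens r (outer u v) = outer (Yop r u) v + outer u (Yop r v)"
  by (intro ext) (simp add: Ytens_apply Yop_def outer_def)

lemma sum_binomial_pascal:
  fixes f :: "nat \<Rightarrow> nat \<Rightarrow> 'a::comm_semiring_1"
  shows "(\<Sum>l\<le>n. of_nat (n choose l) * (f (Suc l) (n - l) + f l (Suc n - l)))
       = (\<Sum>l\<le>Suc n. of_nat (Suc n choose l) * f l (Suc n - l))"
proof -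
  have "(\<Sum>l\<le>n. of_nat (n choose l) * f l (Suc n - l))
      = f 0 (Suc n) + (\<Sum>l\<le>n. of_nat (n choose Suc l) * f (Suc l) (n - l))"
    using sum.atMost_Suc_shift[of "\<lambda>l. of_nat (n choose l) * f l (Suc n - l)" n]
    by (simp add: binomial_eq_0)
  then show ?thesis
    by (subst sum.atMost_Suc_shift) (simp add: sum.distrib algebra_simps)
qed

lemma Ytens_pow_outer:
  "(Ytens r ^^ n) (outer u v)
     = (\<Sum>l\<le>n. tscale (of_nat (n choose l)) (outer ((Yop r ^^ l) u) ((Yop r ^^ (n - l)) v)))"
proof (induction n)
  case (Suc n)
  let ?f = "\<lambda>l l'. outer ((Yop r ^^ l) u) ((Yop r ^^ l') v)"
  have "(Ytens r ^^ Suc n) (outer u v) = (\<Sum>l\<le>n. tscale (of_nat (n choose l)) (Ytens r (?f l (n - l))))"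
    by (simp add: Suc.IH tens_endo.linear_sum[OF linear_Ytens] tens_endo.linear_scale[OF linear_Ytens])
  also have "\<dots> = (\<Sum>l\<le>n. tscale (of_nat (n choose l)) (?f (Suc l) (n - l) + ?f l (Suc n - l)))"
    by (intro sum.cong refl) (simp add: Ytens_outer Suc_diff_le)
  also have "\<dots> = (\<Sum>l\<le>Suc n. tscale (of_nat (Suc n choose l)) (?f l (Suc n - l)))"
  proof (intro ext)
    fix i j
    show "(\<Sum>l\<le>n. tscale (of_nat (n choose l)) (?f (Suc l) (n - l) + ?f l (Suc n - l))) i j
        = (\<Sum>l\<le>Suc n. tscale (of_nat (Suc n choose l)) (?f l (Suc n - l))) i j"
      unfolding sum_fun_apply2 tscale_def plus_fun_apply
      by (rule sum_binomial_pascal[where f = "\<lambda>l l'. ?f l l' i j"])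
  qed
  finally show ?case .
qed (simp add: tscale_def)

lemma sum_atLeast1_truncate:
  fixes f :: "nat \<Rightarrow> 'a::comm_monoid_add"
  assumes "\<And>q. i < q \<Longrightarrow> f q = 0"
  shows "(\<Sum>q\<in>{1..p}. f q) = (\<Sum>q\<in>{1..i}. if q \<le> p then f q else 0)"
proof -
  have "(\<Sum>q\<in>{1..p}. f q) = (\<Sum>q\<in>{1..min i p}. f q)"
    by (rule sum.mono_neutral_right) (auto simp: assms)
  also have "\<dots> = (\<Sum>q\<in>{1..i}. if q \<le> p then f q else 0)"
    by (rule sum.mono_neutral_cong_left) auto
  finally show ?thesis .
qed

lemma osc_point_translate:
  "osc_point r p t lam i = (\<Sum>n\<le>r. t ^ n / fact n * (Yop r ^^ n) (osc_point r p 0 lam) i)"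
proof (cases "i \<le> r")
  case True
  define b where "b = osc_point r p 0 lam"
  have b: "\<forall>i>r. b i = 0"
    by (simp add: b_def osc_point_eq)
  have bq: "b q = (if q = 0 then 1 else if q \<le> p then lam q * fact q else 0)" if "q \<le> r" for q
    using that by (simp add: b_def osc_point_zero)
  have "(\<Sum>n\<le>r. t ^ n / fact n * (Yop r ^^ n) b i) = (\<Sum>n\<le>i. of_nat (i choose n) * t ^ n * b (i - n))"
    using True by (intro sum.mono_neutral_cong_right) (auto simp: Yop_pow_apply[OF b])
  also have "\<dots> = (\<Sum>q\<le>i. of_nat (i choose q) * t ^ (i - q) * b q)"
    by (rule sum.reindex_bij_witness[where i = "\<lambda>q. i - q" and j = "\<lambda>q. i - q"])
      (auto simp: binomial_symmetric[symmetric])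
  also have "\<dots> = t ^ i + (\<Sum>q\<in>{1..i}. if q \<le> p then lam q * of_nat (fact q * (i choose q)) * t ^ (i - q) else 0)"
    using True by (simp add: atMost_atLeast0 sum.atLeast_Suc_atMost bq) (intro sum.cong, auto)
  also have "\<dots> = osc_point r p t lam i"
    using True sum_atLeast1_truncate[of i "\<lambda>q. lam q * of_nat (fact q * (i choose q)) * t ^ (i - q)" p]
    by (simp add: osc_point_eq binomial_eq_0)
  finally show ?thesis
    by (simp add: b_def)
qed (simp add: osc_point_eq Yop_pow_apply)

lemma sq_translate:
  fixes t :: complex
  assumes b: "\<forall>i>r. b i = 0"
  defines "c n \<equiv> t ^ n / fact n"
  shows "sq (\<lambda>i. \<Sum>n\<le>r. c n * (Yop r ^^ n) b i) = (\<Sum>n\<le>2 * r. tscale (c n) ((Ytens r ^^ n) (sq b)))"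
proof (intro ext)
  fix i j
  define F where "F l l' = c l * (Yop r ^^ l) b i * (c l' * (Yop r ^^ l') b j)" for l l'
  have "sq (\<lambda>i. \<Sum>n\<le>r. c n * (Yop r ^^ n) b i) i j = (\<Sum>(l, l')\<in>{..r} \<times> {..r}. F l l')"
    unfolding sq_def F_def sum_product sum.cartesian_product ..
  also have "\<dots> = (\<Sum>(l, l')\<in>{(l, l'). l + l' \<le> 2 * r}. F l l')"
  proof (rule sum.mono_neutral_left)
    show "finite {(l, l'). l + l' \<le> 2 * r}"
      by (rule finite_subset[of _ "{..2 * r} \<times> {..2 * r}"]) auto
    show "\<forall>x\<in>{(l, l'). l + l' \<le> 2 * r} - {..r} \<times> {..r}. (case x of (l, l') \<Rightarrow> F l l') = 0"
      by (auto simp: F_def Yop_pow_apply[OF b] split: if_splits)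
  qed auto
  also have "\<dots> = (\<Sum>n\<le>2 * r. \<Sum>l\<le>n. F l (n - l))"
    by (rule sum.triangle_reindex_eq)
  also have "\<dots> = (\<Sum>n\<le>2 * r. c n * (\<Sum>l\<le>n. of_nat (n choose l) * ((Yop r ^^ l) b i * (Yop r ^^ (n - l)) b j)))"
  proof (intro sum.cong refl)
    fix n
    have "c l * c (n - l) = c n * of_nat (n choose l)" if "l \<le> n" for l
      using that binomial_fact[OF that, where 'a = complex]
      by (simp add: c_def field_simps flip: power_add)
    then show "(\<Sum>l\<le>n. F l (n - l)) = c n * (\<Sum>l\<le>n. of_nat (n choose l) * ((Yop r ^^ l) b i * (Yop r ^^ (n - l)) b j))"
      unfolding sum_distrib_left F_def by (intro sum.cong refl) (simp add: algebra_simps)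
  qed
  also have "\<dots> = (\<Sum>n\<le>2 * r. tscale (c n) ((Ytens r ^^ n) (sq b))) i j"
    unfolding sq_eq_outer Ytens_pow_outer
    by (simp add: sum_fun_apply2 tscale_def outer_def sum_distrib_left)
  finally show "sq (\<lambda>i. \<Sum>n\<le>r. c n * (Yop r ^^ n) b i) i j = (\<Sum>n\<le>2 * r. tscale (c n) ((Ytens r ^^ n) (sq b))) i j" .
qed

lemma sq_osc_point_span_Mgens:
  assumes "1 \<le> m" "2 * m \<le> r"
  shows "sq (osc_point r (m - 1) t lam) \<in> tens.span (Mgens r m)"
proof -
  define b where "b = osc_point r (m - 1) 0 lam"
  have b: "\<forall>i>r. b i = 0" "\<forall>i\<ge>m. b i = 0"
    using assms by (auto simp: b_def osc_point_zero)
  have "osc_point r (m - 1) t lam = (\<lambda>i. \<Sum>n\<le>r. t ^ n / fact n * (Yop r ^^ n) b i)"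
    unfolding b_def by (rule ext, rule osc_point_translate)
  then have "sq (osc_point r (m - 1) t lam) = (\<Sum>n\<le>2 * r. tscale (t ^ n / fact n) ((Ytens r ^^ n) (sq b)))"
    using sq_translate[OF b(1)] by simp
  also have "\<dots> \<in> tens.span (Mgens r m)"
    by (intro tens.span_sum tens.span_scale Ytens_pow_span_Mgens sq_span_Mgens assms b(2))
  finally show ?thesis .
qed

section \<open>Closedness of M_m\<close>

definition unit_tensor :: "nat \<Rightarrow> nat \<Rightarrow> (nat \<Rightarrow> nat \<Rightarrow> complex)" where
  "unit_tensor i j = (\<lambda>i' j'. if i' = i \<and> j' = j then 1 else 0)"

definition quad_monom :: "nat \<Rightarrow> nat \<Rightarrow> (nat \<Rightarrow> nat)" where
  "quad_monom i j = (\<lambda>l. (if l = i then 1 else 0) + (if l = j then 1 else 0))"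

text \<open>The quadratic form a \<mapsto> \<psi>(a (x) a), as coefficients of a homogeneous polynomial.\<close>

definition quad_coeffs :: "nat \<Rightarrow> ((nat \<Rightarrow> nat \<Rightarrow> complex) \<Rightarrow> complex) \<Rightarrow> (nat \<Rightarrow> nat) \<Rightarrow> complex" where
  "quad_coeffs r \<psi> \<alpha> =
     (\<Sum>(i, j)\<in>{x \<in> {..r} \<times> {..r}. case_prod quad_monom x = \<alpha>}. \<psi> (unit_tensor i j))"

lemma sq_eq_sum_unit_tensor:
  assumes "a \<in> PV r"
  shows "sq a = (\<Sum>(i, j)\<in>{..r} \<times> {..r}. tscale (a i * a j) (unit_tensor i j))"
proof (intro ext)
  fix i' j'
  have "(\<Sum>(i, j)\<in>{..r} \<times> {..r}. tscale (a i * a j) (unit_tensor i j)) i' j'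
      = (\<Sum>x\<in>{..r} \<times> {..r}. if x = (i', j') then a i' * a j' else 0)"
    unfolding sum_fun_apply2 tscale_def unit_tensor_def by (intro sum.cong) (auto split: if_splits)
  also have "\<dots> = sq a i' j'"
    using assms by (auto simp: sq_def PV_def)
  finally show "sq a i' j' = (\<Sum>(i, j)\<in>{..r} \<times> {..r}. tscale (a i * a j) (unit_tensor i j)) i' j'" ..
qed

lemma hpoly_quad_coeffs:
  assumes lin: "Vector_Spaces.linear tscale (*) \<psi>" and a: "a \<in> PV r"
  shows "hpoly r 2 (quad_coeffs r \<psi>) a = \<psi> (sq a)"
proof -
  let ?h = "\<lambda>(i, j). \<psi> (unit_tensor i j) * (a i * a j)"
  have monom: "(\<Prod>l\<le>r. a l ^ quad_monom i j l) = a i * a j" if "i \<le> r" "j \<le> r" for i j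
  proof -
    have "(\<Prod>l\<le>r. a l ^ quad_monom i j l) = (\<Prod>l\<le>r. (if l = i then a l else 1) * (if l = j then a l else 1))"
      unfolding quad_monom_def power_add by (intro prod.cong refl) auto
    then show ?thesis
      using that by (simp add: prod.distrib)
  qed
  have "hpoly r 2 (quad_coeffs r \<psi>) a
      = (\<Sum>\<alpha>\<in>monoms r 2. \<Sum>x\<in>{x \<in> {..r} \<times> {..r}. case_prod quad_monom x = \<alpha>}. ?h x)"
    unfolding hpoly_def quad_coeffs_def sum_distrib_right
    by (intro sum.cong refl) (auto simp: monom)
  also have "\<dots> = (\<Sum>x\<in>{..r} \<times> {..r}. ?h x)"
    by (rule sum.group) (auto simp: finite_monoms, auto simp: monoms_def quad_monom_def sum.distrib)
  also have "\<dots> = \<psi> (sq a)"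
    unfolding sq_eq_sum_unit_tensor[OF a] tens_dual.linear_sum[OF lin]
    by (simp add: case_prod_beta mult.commute tens_dual.linear_scale[OF lin])
  finally show ?thesis .
qed

lemma separating_functional:
  assumes "v \<notin> tens.span G"
  obtains \<psi> where "Vector_Spaces.linear tscale (*) \<psi>" "\<forall>x\<in>G. \<psi> x = 0" "\<psi> v = 1"
proof -
  obtain B where B: "B \<subseteq> G" "tens.independent B" "G \<subseteq> tens.span B"
    by (rule tens.maximal_independent_subset)
  have vB: "v \<notin> tens.span B"
    using assms tens.span_mono[OF B(1)] by blast
  obtain \<psi> where \<psi>: "Vector_Spaces.linear tscale (*) \<psi>" "\<forall>x\<in>insert v B. \<psi> x = (if x = v then 1 else 0)"
    using tens_dual.linear_independent_extend[OF tens.independent_insertI[OF vB B(2)],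
        of "\<lambda>x. if x = v then 1 else 0"] by blast
  have "\<forall>x\<in>G. \<psi> x = 0"
    using tens_dual.linear_eq_0_on_span[OF \<psi>(1)] B(3) \<psi>(2) vB tens.span_base by fastforce
  then show ?thesis
    using that \<psi> by simp
qed

lemma zclosed_sq_in_span: "zclosed r {a \<in> PV r. sq a \<in> tens.span G}"
proof -
  define F where "F = {(2::nat, quad_coeffs r \<psi>) | \<psi>.
      Vector_Spaces.linear tscale (*) \<psi> \<and> (\<forall>x\<in>G. \<psi> x = 0)}"
  have "sq a \<in> tens.span G \<longleftrightarrow> (\<forall>(d, c) \<in> F. hpoly r d c a = 0)" if a: "a \<in> PV r" for a
  proof
    assume "sq a \<in> tens.span G"
    then show "\<forall>(d, c) \<in> F. hpoly r d c a = 0"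
      unfolding F_def using tens_dual.linear_eq_0_on_span hpoly_quad_coeffs[OF _ a] by fastforce
  next
    assume h: "\<forall>(d, c) \<in> F. hpoly r d c a = 0"
    show "sq a \<in> tens.span G"
    proof (rule ccontr)
      assume "sq a \<notin> tens.span G"
      then obtain \<psi> where \<psi>: "Vector_Spaces.linear tscale (*) \<psi>" "\<forall>x\<in>G. \<psi> x = 0" "\<psi> (sq a) = 1"
        by (rule separating_functional)
      then have "hpoly r 2 (quad_coeffs r \<psi>) a = 0"
        using h unfolding F_def by blast
      then show False
        using \<psi>(3) hpoly_quad_coeffs[OF \<psi>(1) a] by simp
    qed
  qed
  then have "{a \<in> PV r. sq a \<in> tens.span G} = {a \<in> PV r. \<forall>(d, c) \<in> F. hpoly r d c a = 0}"
    by blast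
  then show ?thesis
    unfolding zclosed_def by blast
qed

lemma osc_subset_Mvar:
  assumes "1 \<le> m" "2 * m \<le> r"
  shows "osc r (m - 1) \<subseteq> Mvar r m"
  unfolding osc_def
proof (rule zclosure_least)
  show "zclosed r (Mvar r m)"
    unfolding Mvar_eq_span by (rule zclosed_sq_in_span)
  show "osc_image r (m - 1) \<inter> PV r \<subseteq> Mvar r m"
    unfolding osc_image_eq Mvar_eq_span using sq_osc_point_span_Mgens[OF assms] osc_point_PV by blast
qed

section \<open>Irreducibility and the chain of osculating varieties\<close>

definition poly_fun :: "(complex \<Rightarrow> complex) \<Rightarrow> bool" where
  "poly_fun f \<longleftrightarrow> (\<exists>P. \<forall>s. f s = poly P s)"

lemma poly_fun_const: "poly_fun (\<lambda>s. c)"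
  unfolding poly_fun_def by (rule exI[of _ "[:c:]"]) simp

lemma poly_fun_id: "poly_fun (\<lambda>s. s)"
  unfolding poly_fun_def by (rule exI[of _ "[:0, 1:]"]) simp

lemma poly_fun_add: "poly_fun f \<Longrightarrow> poly_fun g \<Longrightarrow> poly_fun (\<lambda>s. f s + g s)"
  unfolding poly_fun_def by (metis poly_add)

lemma poly_fun_mult: "poly_fun f \<Longrightarrow> poly_fun g \<Longrightarrow> poly_fun (\<lambda>s. f s * g s)"
  unfolding poly_fun_def by (metis poly_mult)

lemma poly_fun_sum: "(\<And>x. x \<in> A \<Longrightarrow> poly_fun (f x)) \<Longrightarrow> poly_fun (\<lambda>s. \<Sum>x\<in>A. f x s)"
  by (induction A rule: infinite_finite_induct) (auto intro: poly_fun_const poly_fun_add)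

lemma poly_fun_prod: "(\<And>x. x \<in> A \<Longrightarrow> poly_fun (f x)) \<Longrightarrow> poly_fun (\<lambda>s. \<Prod>x\<in>A. f x s)"
  by (induction A rule: infinite_finite_induct) (auto intro: poly_fun_const poly_fun_mult)

lemma poly_fun_power: "poly_fun f \<Longrightarrow> poly_fun (\<lambda>s. f s ^ n)"
  by (induction n) (auto intro: poly_fun_const poly_fun_mult)

lemma poly_fun_hpoly: "(\<And>i. poly_fun (\<lambda>s. \<gamma> s i)) \<Longrightarrow> poly_fun (\<lambda>s. hpoly r d c (\<gamma> s))"
  unfolding hpoly_def by (intro poly_fun_sum poly_fun_mult poly_fun_const poly_fun_prod poly_fun_power)

lemma poly_fun_zero_product:
  assumes "poly_fun f" "poly_fun g" "\<And>s. f s = 0 \<or> g s = 0"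
  shows "(\<forall>s. f s = 0) \<or> (\<forall>s. g s = 0)"
proof -
  obtain P Q where "\<forall>s. f s = poly P s" "\<forall>s. g s = poly Q s"
    using assms(1,2) unfolding poly_fun_def by blast
  moreover from this have "poly (P * Q) = (\<lambda>s. 0)"
    using assms(3) by auto
  then have "P = 0 \<or> Q = 0"
    using poly_all_0_iff_0 by (metis no_zero_divisors)
  ultimately show ?thesis
    by auto
qed

text \<open>If two points of S lay off the closed sets A and B, the equations of A and B would
  give two nonzero polynomials along a polynomial curve through them whose product vanishes.\<close>

lemma zirreducible_zclosure:
  assumes "S \<subseteq> PV r" "S \<noteq> {}"
    and curve: "\<And>u v. u \<in> S \<Longrightarrow> v \<in> S \<Longrightarrow>
       \<exists>\<gamma>. \<gamma> 0 = u \<and> \<gamma> 1 = v \<and> (\<forall>s. \<gamma> s \<in> S) \<and> (\<forall>i. poly_fun (\<lambda>s. \<gamma> s i))"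
  shows "zirreducible r (zclosure r S)"
  unfolding zirreducible_def
proof (intro conjI allI impI)
  show "zclosed r (zclosure r S)"
    by (rule zclosed_zclosure)
  have S: "S \<subseteq> zclosure r S"
    using zclosure_superset[of S r] assms(1) by blast
  then show "zclosure r S \<noteq> {}"
    using assms(2) by blast
  fix A B assume AB: "zclosed r A \<and> zclosed r B \<and> zclosure r S \<subseteq> A \<union> B"
  obtain FA where A: "A = {a \<in> PV r. \<forall>(d, c) \<in> FA. hpoly r d c a = 0}"
    using AB unfolding zclosed_def by blast
  obtain FB where B: "B = {a \<in> PV r. \<forall>(d, c) \<in> FB. hpoly r d c a = 0}"
    using AB unfolding zclosed_def by blast
  have "S \<subseteq> A \<or> S \<subseteq> B"
  proof (rule ccontr)
    assume "\<not> (S \<subseteq> A \<or> S \<subseteq> B)"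
    then obtain u v where u: "u \<in> S" "u \<notin> A" and v: "v \<in> S" "v \<notin> B"
      by blast
    obtain d1 c1 where p1: "(d1, c1) \<in> FA" "hpoly r d1 c1 u \<noteq> 0"
      using u assms(1) A by blast
    obtain d2 c2 where p2: "(d2, c2) \<in> FB" "hpoly r d2 c2 v \<noteq> 0"
      using v assms(1) B by blast
    obtain \<gamma> where \<gamma>: "\<gamma> 0 = u" "\<gamma> 1 = v" "\<forall>s. \<gamma> s \<in> S" "\<forall>i. poly_fun (\<lambda>s. \<gamma> s i)"
      using curve[OF u(1) v(1)] by blast
    have "hpoly r d1 c1 (\<gamma> s) = 0 \<or> hpoly r d2 c2 (\<gamma> s) = 0" for s
      using \<gamma>(3) S AB p1(1) p2(1) unfolding A B by blast
    then have "(\<forall>s. hpoly r d1 c1 (\<gamma> s) = 0) \<or> (\<forall>s. hpoly r d2 c2 (\<gamma> s) = 0)"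
      using poly_fun_hpoly \<gamma>(4) by (intro poly_fun_zero_product) auto
    then show False
      using p1(2) p2(2) \<gamma>(1,2) by auto
  qed
  then show "zclosure r S \<subseteq> A \<or> zclosure r S \<subseteq> B"
    using zclosure_least AB by blast
qed

lemma zirreducible_osc: "zirreducible r (osc r p)"
  unfolding osc_def
proof (rule zirreducible_zclosure)
  show "osc_image r p \<subseteq> PV r" "osc_image r p \<noteq> {}"
    unfolding osc_image_eq using osc_point_PV by blast+
  fix u v assume "u \<in> osc_image r p" "v \<in> osc_image r p"
  then obtain t lam t' lam' where uv: "u = osc_point r p t lam" "v = osc_point r p t' lam'"
    unfolding osc_image_eq by blast
  define \<gamma> where "\<gamma> s = osc_point r p (t + s * (t' - t)) (\<lambda>q. lam q + s * (lam' q - lam q))" for s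
  have "\<gamma> 0 = u" "\<gamma> 1 = v"
    unfolding \<gamma>_def uv by simp_all
  moreover have "\<forall>s. \<gamma> s \<in> osc_image r p"
    unfolding \<gamma>_def osc_image_eq by blast
  moreover have "poly_fun (\<lambda>s. \<gamma> s i)" for i
    unfolding \<gamma>_def osc_point_eq
    by (cases "i \<le> r") (auto intro!: poly_fun_add poly_fun_power poly_fun_sum poly_fun_mult poly_fun_const poly_fun_id)
  ultimately show "\<exists>\<gamma>. \<gamma> 0 = u \<and> \<gamma> 1 = v \<and> (\<forall>s. \<gamma> s \<in> osc_image r p) \<and> (\<forall>i. poly_fun (\<lambda>s. \<gamma> s i))"
    by blast
qed

lemma zirreducible_point: "a \<in> PV r \<Longrightarrow> zirreducible r (zclosure r {a})"
  by (rule zirreducible_zclosure) (auto intro!: exI[of _ "\<lambda>s. a"] poly_fun_const)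

lemma osc_psubset:
  assumes "1 \<le> q" "2 * q \<le> r"
  shows "osc r (q - 1) \<subset> osc r q"
  using osc_mono[of r "q - 1"] osc_subset_Mvar[OF assms] osc_not_subset_Mvar[OF assms] assms(1)
  by auto

lemma point_psubset_osc_0:
  assumes "1 \<le> r"
  shows "zclosure r {vcurve r 0} \<subset> osc r 0"
proof -
  have vcurve: "vcurve r t \<in> osc r 0" for t
    using osc_point_osc[of r 0 t "\<lambda>_. 0"] by (simp add: osc_point_def)
  have "zclosure r {vcurve r 0} \<subseteq> osc r 0"
    by (rule zclosure_least) (use vcurve zclosed_zclosure[of r "osc_image r 0"] in \<open>auto simp: osc_def\<close>)
  moreover have "zclosure r {vcurve r 0} \<subseteq> {a \<in> PV r. a 1 = 0}"
    by (rule zclosure_least[OF zclosed_coordinate_hyperplane[OF assms]]) (auto simp: vcurve_def)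
  moreover have "vcurve r 1 \<notin> {a \<in> PV r. a 1 = 0}"
    using assms by (simp add: vcurve_def)
  ultimately show ?thesis
    using vcurve[of 1] by blast
qed

theorem mainTheorem8:
  fixes r m :: nat
  assumes "r \<ge> 2" and "1 \<le> m" and "2 * m \<le> r"
  shows "osc r (m - 1) \<subseteq> Mvar r m \<and> \<not> osc r m \<subseteq> Mvar r m \<and> zdim r (Mvar r m) \<ge> enat m"
proof (intro conjI)
  show sub: "osc r (m - 1) \<subseteq> Mvar r m"
    by (rule osc_subset_Mvar[OF assms(2,3)])
  show "\<not> osc r m \<subseteq> Mvar r m"
    by (rule osc_not_subset_Mvar[OF assms(2,3)])
  define Z where "Z i = (if i = 0 then zclosure r {vcurve r 0} else osc r (i - 1))" for i
  have "\<forall>i\<le>m. zirreducible r (Z i)"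
    using vcurve_PV by (simp add: Z_def zirreducible_point zirreducible_osc)
  moreover have "Z i \<subset> Z (Suc i)" if "i < m" for i
    using point_psubset_osc_0 osc_psubset[of i r] that assms by (cases i) (auto simp: Z_def)
  moreover have "Z m \<subseteq> Mvar r m"
    using sub assms(2) by (simp add: Z_def)
  ultimately show "zdim r (Mvar r m) \<ge> enat m"
    unfolding zdim_def by (intro Sup_upper) blast
qed

end
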